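(* Let $G$ be a $2$-connected (finite, simple) graph with pathwidth $p$. Then every edge of $G$ is contained in a bond $F$ of $G$ such that $p \le 3|F|-2$. In particular, if $G$ has cocircumference $k$, then $\mathrm{pw}(G)\le 3k-2$.
   Context: A bond of a graph $G$ is an inclusion-wise minimal set of edges $F$ such that $G-F$ has more connected components than $G$. The cocircumference of a graph with at least one edge is the maximum size of a bond. A tree-decomposition of $G$ is a family $\{X_u : u\in V(T)\}$ of subsets of $V(G)$ indexed by the nodes of a tree $T$ such that for every $x\in V(G)$ the nodes $u$ with $x\in X_u$ induce a non-empty subtree of $T$, and every edge $xy$ of $G$ satisfies $\{x,y\}\subseteq X_u$ for some $u$; its width is $\max_u |X_u|-1$. A path-decomposition is a tree-decomposition where $T$ is a path, written as a sequence of bags $(X_0,\dots,X_s)$; the pathwidth $\mathrm{pw}(G)$ is the minimum width of a path-decomposition of $G$. *)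

theory Defs
  imports Main
begin

definition simple_graph :: "'a set \<Rightarrow> 'a set set \<Rightarrow> bool" where
  "simple_graph V E \<longleftrightarrow> finite V \<and> (\<forall>e\<in>E. \<exists>x y. e = {x, y} \<and> x \<in> V \<and> y \<in> V \<and> x \<noteq> y)"

definition reach :: "'a set set \<Rightarrow> 'a \<Rightarrow> 'a \<Rightarrow> bool" where
  "reach E = (\<lambda>x y. {x, y} \<in> E)\<^sup>*\<^sup>*"

definition components :: "'a set \<Rightarrow> 'a set set \<Rightarrow> 'a set set" where
  "components V E = {{y \<in> V. reach E x y} | x. x \<in> V}"

definition num_components :: "'a set \<Rightarrow> 'a set set \<Rightarrow> nat" where
  "num_components V E = card (components V E)"

definition connected_graph :: "'a set \<Rightarrow> 'a set set \<Rightarrow> bool" where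
  "connected_graph V E \<longleftrightarrow> V \<noteq> {} \<and> (\<forall>x\<in>V. \<forall>y\<in>V. reach E x y)"

definition two_connected :: "'a set \<Rightarrow> 'a set set \<Rightarrow> bool" where
  "two_connected V E \<longleftrightarrow> card V \<ge> 3 \<and> connected_graph V E \<and>
     (\<forall>v\<in>V. connected_graph (V - {v}) {e \<in> E. v \<notin> e})"

definition disconnecting :: "'a set \<Rightarrow> 'a set set \<Rightarrow> 'a set set \<Rightarrow> bool" where
  "disconnecting V E F \<longleftrightarrow> F \<subseteq> E \<and> num_components V (E - F) > num_components V E"

definition bond :: "'a set \<Rightarrow> 'a set set \<Rightarrow> 'a set set \<Rightarrow> bool" where
  "bond V E F \<longleftrightarrow> disconnecting V E F \<and> (\<forall>F'. F' \<subset> F \<longrightarrow> \<not> disconnecting V E F')"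

definition cocircumference :: "'a set \<Rightarrow> 'a set set \<Rightarrow> nat" where
  "cocircumference V E = Max {card F | F. bond V E F}"

definition path_decomposition :: "'a set \<Rightarrow> 'a set set \<Rightarrow> 'a set list \<Rightarrow> bool" where
  "path_decomposition V E Xs \<longleftrightarrow> Xs \<noteq> [] \<and> (\<forall>X\<in>set Xs. X \<subseteq> V) \<and>
     (\<forall>x\<in>V. (\<exists>i<length Xs. x \<in> Xs ! i) \<and>
        (\<forall>i j k. i \<le> j \<and> j \<le> k \<and> k < length Xs \<and> x \<in> Xs ! i \<and> x \<in> Xs ! k \<longrightarrow> x \<in> Xs ! j)) \<and>
     (\<forall>e\<in>E. \<exists>i<length Xs. e \<subseteq> Xs ! i)"

definition pd_width :: "'a set list \<Rightarrow> nat" where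
  "pd_width Xs = Max (card ` set Xs) - 1"

definition pathwidth :: "'a set \<Rightarrow> 'a set set \<Rightarrow> nat" where
  "pathwidth V E = (LEAST w. \<exists>Xs. path_decomposition V E Xs \<and> pd_width Xs = w)"

end

theory Submission
  imports Defs
begin

text \<open>
  Fix an edge \<open>uv\<close>. In a 2-connected graph the vertices can be ordered
  \<open>u = v\<^sub>1, \<dots>, v\<^sub>n = v\<close> so that every prefix and every suffix induces a connected
  subgraph: a connected prefix \<open>S\<close> is extended by a neighbour \<open>w\<close> of \<open>S\<close> chosen to
  maximise the component of \<open>v\<close> in \<open>G[V - S - w]\<close>, and 2-connectivity forces this
  component to be all of \<open>V - S - w\<close>. Consequently every proper prefix cut is a bond
  containing \<open>uv\<close>. In the path-decomposition along the ordering whose \<open>i\<close>-th bag is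
  \<open>v\<^sub>i\<close> together with the earlier vertices having a neighbour among \<open>v\<^sub>i, \<dots>, v\<^sub>n\<close>,
  each bag has at most one vertex more than the preceding prefix cut has edges. So the
  largest prefix cut \<open>F\<close> gives \<open>pw(G) \<le> |F|\<close>, which is stronger than \<open>pw(G) \<le> 3|F| - 2\<close>.
\<close>

definition induced :: "'a set set \<Rightarrow> 'a set \<Rightarrow> 'a set set" where
  "induced E W = {e \<in> E. e \<subseteq> W}"

definition connected_set :: "'a set set \<Rightarrow> 'a set \<Rightarrow> bool" where
  "connected_set E W \<longleftrightarrow> (\<forall>x\<in>W. \<forall>y\<in>W. reach (induced E W) x y)"

definition component :: "'a set set \<Rightarrow> 'a set \<Rightarrow> 'a \<Rightarrow> 'a set" where
  "component E W x = {y \<in> W. reach (induced E W) x y}"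

definition edge_cut :: "'a set set \<Rightarrow> 'a set \<Rightarrow> 'a set set" where
  "edge_cut E A = {e \<in> E. e \<inter> A \<noteq> {} \<and> \<not> e \<subseteq> A}"

lemma reach_refl [simp]: "reach E x x"
  unfolding reach_def by simp

lemma reach_edge: "{x, y} \<in> E \<Longrightarrow> reach E x y"
  unfolding reach_def by (rule r_into_rtranclp[where r = "\<lambda>x y. {x, y} \<in> E"])

lemma reach_trans: "reach E x y \<Longrightarrow> reach E y z \<Longrightarrow> reach E x z"
  unfolding reach_def by (rule rtranclp_trans)

lemma reach_step: "reach E x y \<Longrightarrow> {y, z} \<in> E \<Longrightarrow> reach E x z"
  by (blast intro: reach_trans reach_edge)

lemma reach_sym: "reach E x y \<Longrightarrow> reach E y x"
  unfolding reach_def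
proof (induction rule: rtranclp_induct)
  case (step y z)
  then have "{z, y} \<in> E" by (simp add: insert_commute)
  then show ?case
    using step.IH by (rule converse_rtranclp_into_rtranclp[where r = "\<lambda>x y. {x, y} \<in> E"])
qed simp

lemma reach_mono: "reach E x y \<Longrightarrow> E \<subseteq> E' \<Longrightarrow> reach E' x y"
  unfolding reach_def by (induction rule: rtranclp_induct) (auto intro: rtranclp.rtrancl_into_rtrancl)

lemma reach_leaves_set:
  assumes "reach E x y" "x \<in> A" "y \<notin> A"
  obtains a b where "{a, b} \<in> E" "a \<in> A" "b \<notin> A"
  using assms unfolding reach_def by (induction rule: rtranclp_induct) auto

lemma reach_induced_in:
  assumes "reach (induced E W) x y" "x \<in> W"
  shows "y \<in> W"
  using assms unfolding reach_def by (induction rule: rtranclp_induct) (auto simp: induced_def)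

lemma component_subset: "component E W x \<subseteq> W"
  unfolding component_def by blast

lemma self_in_component: "x \<in> W \<Longrightarrow> x \<in> component E W x"
  unfolding component_def by simp

lemma connected_set_iff_component:
  assumes "r \<in> W"
  shows "connected_set E W \<longleftrightarrow> component E W r = W"
proof
  assume "connected_set E W"
  then show "component E W r = W"
    using assms unfolding connected_set_def component_def by blast
next
  assume "component E W r = W"
  then have "reach (induced E W) r x" if "x \<in> W" for x
    using that unfolding component_def by blast
  then show "connected_set E W"
    unfolding connected_set_def by (blast intro: reach_sym reach_trans)
qed

lemma connected_set_insert:
  assumes "connected_set E S" "s \<in> S" "{s, w} \<in> E"
  shows "connected_set E (insert w S)"
proof -
  have sub: "induced E S \<subseteq> induced E (insert w S)"
    and sw: "{s, w} \<in> induced E (insert w S)"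
    using assms(2,3) unfolding induced_def by auto
  have "reach (induced E (insert w S)) s x" if "x \<in> insert w S" for x
  proof (cases "x = w")
    case True
    then show ?thesis using sw by (simp add: reach_edge)
  next
    case False
    then have "reach (induced E S) s x"
      using that assms(1,2) unfolding connected_set_def by blast
    then show ?thesis using sub by (rule reach_mono)
  qed
  then have "component E (insert w S) s = insert w S"
    unfolding component_def by blast
  then show ?thesis
    using connected_set_iff_component[of s "insert w S" E] assms(2) by blast
qed

lemma reach_within_component:
  assumes "reach (induced E W) x y" "x \<in> W"
  shows "reach (induced E (component E W x)) x y"
  using assms(1) unfolding reach_def
proof (induction rule: rtranclp_induct)
  case (step y z)
  have xy: "reach (induced E W) x y"
    using step.hyps(1) unfolding reach_def .
  then have xz: "reach (induced E W) x z"
    using step.hyps(2) by (rule reach_step)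
  have "y \<in> W" "z \<in> W"
    using reach_induced_in[OF xy assms(2)] reach_induced_in[OF xz assms(2)] .
  then have "{y, z} \<in> induced E (component E W x)"
    using step.hyps(2) xy xz unfolding component_def induced_def by auto
  with step.IH show ?case
    by (rule rtranclp.rtrancl_into_rtrancl)
qed simp

lemma component_subset_component:
  assumes "x \<in> W" "component E W x \<subseteq> W'"
  shows "component E W x \<subseteq> component E W' x"
proof
  fix y assume y: "y \<in> component E W x"
  then have "reach (induced E W) x y"
    unfolding component_def by blast
  then have "reach (induced E (component E W x)) x y"
    using assms(1) by (rule reach_within_component)
  moreover have "induced E (component E W x) \<subseteq> induced E W'"
    using assms(2) unfolding induced_def by blast
  ultimately have "reach (induced E W') x y"
    by (rule reach_mono)
  then show "y \<in> component E W' x"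
    using y assms(2) unfolding component_def by blast
qed

lemma edge_endpoints:
  assumes "simple_graph V E" "{a, b} \<in> E"
  shows "a \<in> V" "b \<in> V" "a \<noteq> b"
  using assms unfolding simple_graph_def by (fastforce simp: doubleton_eq_iff)+

lemma edge_is_pair:
  assumes "simple_graph V E" "e \<in> E"
  obtains a b where "e = {a, b}" "a \<in> V" "b \<in> V" "a \<noteq> b"
  using assms unfolding simple_graph_def by blast

lemma edge_subset_vertices: "simple_graph V E \<Longrightarrow> e \<in> E \<Longrightarrow> e \<subseteq> V"
  by (elim edge_is_pair) auto

lemma finite_edges: "simple_graph V E \<Longrightarrow> finite E"
  unfolding simple_graph_def by (rule finite_subset[of E "Pow V"]) auto

lemma induced_all_vertices: "simple_graph V E \<Longrightarrow> induced E V = E"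
  unfolding induced_def simple_graph_def by auto

subsection \<open>Orderings of 2-connected graphs\<close>

lemma two_connected_reach_avoiding:
  assumes "two_connected V E" "w \<in> V" "x \<in> V - {w}" "y \<in> V - {w}"
  shows "reach {e \<in> E. w \<notin> e} x y"
  using assms unfolding two_connected_def connected_graph_def by blast

lemma connected_set_vertices:
  "simple_graph V E \<Longrightarrow> connected_graph V E \<Longrightarrow> connected_set E V"
  unfolding connected_graph_def connected_set_def by (simp add: induced_all_vertices)

lemma two_connected_connected_set_delete:
  assumes sg: "simple_graph V E" and tc: "two_connected V E" and "u \<in> V"
  shows "connected_set E (V - {u})"
proof -
  have "induced E (V - {u}) = {e \<in> E. u \<notin> e}"
    using edge_subset_vertices[OF sg] unfolding induced_def by blast
  then show ?thesis
    using tc assms(3) unfolding two_connected_def connected_graph_def connected_set_def by simp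
qed

lemma two_connected_component_attaches:
  assumes sg: "simple_graph V E" and tc: "two_connected V E"
    and "T \<subseteq> V" "u \<in> V - T" "w \<in> T" "z \<in> T - {w}"
  obtains a b where "a \<in> component E (T - {w}) z" "b \<in> V - T" "{a, b} \<in> E"
proof -
  let ?K = "component E (T - {w}) z"
  have "w \<in> V" "z \<in> V - {w}" "u \<in> V - {w}"
    using assms(3-6) by auto
  then have "reach {e \<in> E. w \<notin> e} z u"
    by (rule two_connected_reach_avoiding[OF tc])
  moreover have "z \<in> ?K"
    using assms(6) by (rule self_in_component)
  moreover have "u \<notin> ?K"
    using assms(4) component_subset[of E "T - {w}" z] by blast
  ultimately obtain a b where "{a, b} \<in> {e \<in> E. w \<notin> e}" "a \<in> ?K" "b \<notin> ?K"
    by (rule reach_leaves_set)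
  then have ab: "{a, b} \<in> E" "w \<notin> {a, b}" "a \<in> ?K" "b \<notin> ?K"
    by simp_all
  have "b \<notin> T"
  proof
    assume "b \<in> T"
    have "a \<in> T - {w}"
      using ab(3) component_subset[of E "T - {w}" z] by blast
    with ab(1,2) \<open>b \<in> T\<close> have "{a, b} \<in> induced E (T - {w})"
      unfolding induced_def by auto
    moreover have "reach (induced E (T - {w})) z a"
      using ab(3) unfolding component_def by blast
    ultimately have "reach (induced E (T - {w})) z b"
      by (rule reach_step[rotated])
    with \<open>b \<in> T\<close> ab(2) have "b \<in> ?K"
      unfolding component_def by blast
    with ab(4) show False ..
  qed
  with edge_endpoints(2)[OF sg ab(1)] have "b \<in> V - T"
    by blast
  with ab(1,3) show thesis
    by (intro that)
qed

lemma component_grows: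
  assumes "finite T" "connected_set E T" "v \<in> T" "w \<in> T" "w \<noteq> v"
    and "a \<noteq> w" "a \<notin> component E (T - {w}) v"
  shows "card (component E (T - {w}) v) < card (component E (T - {a}) v)"
proof -
  let ?C = "component E (T - {w}) v" and ?D = "component E (T - {a}) v"
  have C_sub: "?C \<subseteq> T - {w}" and D_sub: "?D \<subseteq> T - {a}"
    by (rule component_subset)+
  have vC: "v \<in> ?C"
    using assms(3,5) by (simp add: self_in_component)
  then have "v \<noteq> a" using assms(7) by blast
  then have CD: "?C \<subseteq> ?D"
    using assms(3,5,7) C_sub by (intro component_subset_component) auto
  have "w \<notin> ?C"
    using C_sub by blast
  have "reach (induced E T) v w"
    using assms(2-4) unfolding connected_set_def by blast
  then obtain c d where cd: "{c, d} \<in> induced E T" "c \<in> ?C" "d \<notin> ?C"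
    using vC \<open>w \<notin> ?C\<close> by (rule reach_leaves_set)
  have "d = w"
  proof (rule ccontr)
    assume "d \<noteq> w"
    have "reach (induced E (T - {w})) v c"
      using cd(2) unfolding component_def by blast
    moreover have "{c, d} \<in> induced E (T - {w})"
      using cd(1,2) C_sub \<open>d \<noteq> w\<close> unfolding induced_def by blast
    ultimately have "reach (induced E (T - {w})) v d"
      by (rule reach_step)
    then have "d \<in> ?C"
      using cd(1) \<open>d \<noteq> w\<close> unfolding component_def induced_def by blast
    with cd(3) show False ..
  qed
  have "c \<in> ?D"
    using CD cd(2) by blast
  then have "reach (induced E (T - {a})) v c"
    unfolding component_def by blast
  moreover have "{c, w} \<in> induced E (T - {a})"
    using cd(1) \<open>d = w\<close> \<open>c \<in> ?D\<close> D_sub assms(4,6) unfolding induced_def by blast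
  ultimately have "reach (induced E (T - {a})) v w"
    by (rule reach_step)
  then have "w \<in> ?D"
    using assms(4,6) unfolding component_def by blast
  then have "insert w ?C \<subseteq> ?D"
    using CD by blast
  moreover have "finite ?D"
    using assms(1) D_sub finite_subset by blast
  ultimately have "card (insert w ?C) \<le> card ?D"
    by (rule card_mono[rotated])
  moreover have "finite ?C"
    using assms(1) C_sub finite_subset by blast
  ultimately show ?thesis
    using \<open>w \<notin> ?C\<close> by simp
qed

lemma two_connected_extend_partition:
  assumes sg: "simple_graph V E" and tc: "two_connected V E"
    and S: "S \<subseteq> V" "S \<noteq> {}" "connected_set E S"
    and T: "v \<in> V - S" "V - S \<noteq> {v}" "connected_set E (V - S)"
  obtains w where "w \<in> V - S - {v}" "connected_set E (insert w S)" "connected_set E (V - S - {w})"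
proof -
  define T where "T = V - S"
  define N where "N = {w \<in> T - {v}. \<exists>s\<in>S. {s, w} \<in> E}"
  let ?C = "\<lambda>w. component E (T - {w}) v"
  have finT: "finite T"
    using sg unfolding simple_graph_def T_def by simp
  have VT: "V - T = S"
    using S(1) unfolding T_def by blast
  obtain u where u: "u \<in> S"
    using S(2) by blast
  have attach: "\<exists>a\<in>component E (T - {w}) z. \<exists>b\<in>S. {b, a} \<in> E"
    if "w \<in> T" "z \<in> T - {w}" for w z
    using two_connected_component_attaches[OF sg tc _ _ that, of u] u VT
    unfolding T_def by (metis Diff_subset insert_commute)
  obtain t where "t \<in> T - {v}"
    using T(1,2) unfolding T_def by blast
  with attach[of v t] T(1) obtain a where "a \<in> N"
    using component_subset[of E "T - {v}" t] unfolding N_def T_def by blast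
  moreover have "card (?C w) < Suc (card T)" for w
    using card_mono[OF finT, of "?C w"] component_subset[of E "T - {w}" v] by force
  ultimately obtain w where w: "w \<in> N" and w_max: "\<And>a. a \<in> N \<Longrightarrow> card (?C a) \<le> card (?C w)"
    using ex_has_greatest_nat[of "\<lambda>w. w \<in> N" a "\<lambda>w. card (?C w)"] by blast
  then obtain s where w_T: "w \<in> T - {v}" and s: "s \<in> S" "{s, w} \<in> E"
    unfolding N_def by blast
  have "?C w = T - {w}"
  proof (rule ccontr)
    assume "?C w \<noteq> T - {w}"
    then obtain z where z: "z \<in> T - {w}" "z \<notin> ?C w"
      using component_subset[of E "T - {w}" v] by blast
    then obtain a b where a: "a \<in> component E (T - {w}) z" and b: "b \<in> S" "{b, a} \<in> E"
      using attach[of w z] w_T by blast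
    have a_T: "a \<in> T - {w}"
      using a component_subset[of E "T - {w}" z] by blast
    have "a \<notin> ?C w"
    proof
      assume "a \<in> ?C w"
      then have "reach (induced E (T - {w})) v a" "reach (induced E (T - {w})) z a"
        using a unfolding component_def by blast+
      then have "reach (induced E (T - {w})) v z"
        by (blast intro: reach_trans reach_sym)
      with z show False
        unfolding component_def by blast
    qed
    moreover have "v \<in> ?C w"
      using T(1) w_T unfolding T_def by (intro self_in_component) auto
    ultimately have "a \<in> N"
      using a_T b unfolding N_def by blast
    moreover have "card (?C w) < card (?C a)"
      using component_grows[OF finT T(3)[folded T_def] _ _ _ _ \<open>a \<notin> ?C w\<close>]
        T(1) w_T a_T unfolding T_def by blast
    ultimately show False
      using w_max by (simp add: not_le[symmetric])
  qed
  then have "connected_set E (T - {w})"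
    using connected_set_iff_component[of v "T - {w}" E] T(1) w_T unfolding T_def by blast
  moreover have "connected_set E (insert w S)"
    using S(3) s by (rule connected_set_insert)
  ultimately show thesis
    using that w_T unfolding T_def by blast
qed

lemma two_connected_ordering_extension:
  assumes sg: "simple_graph V E" and tc: "two_connected V E"
    and "S \<subseteq> V" "S \<noteq> {}" "connected_set E S" "v \<in> V - S" "connected_set E (V - S)"
  shows "\<exists>ws. distinct ws \<and> set ws = V - S \<and> last ws = v \<and>
           (\<forall>k. connected_set E (S \<union> set (take k ws)) \<and> connected_set E (set (drop k ws)))"
  using assms(3-)
proof (induction "card (V - S)" arbitrary: S rule: less_induct)
  case less
  show ?case
  proof (cases "V - S = {v}")
    case True
    then have "S \<union> {v} = V"
      using less.prems(1) by blast
    moreover have "connected_set E V"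
      using sg tc unfolding two_connected_def by (blast intro: connected_set_vertices)
    ultimately have "connected_set E (S \<union> set (take k [v])) \<and> connected_set E (set (drop k [v]))" for k
      using less.prems(3,5) True by (cases k) (auto simp: connected_set_def)
    with True show ?thesis
      by (intro exI[of _ "[v]"]) simp
  next
    case False
    with sg tc less.prems obtain w where w: "w \<in> V - S - {v}"
      and S': "connected_set E (insert w S)" and T': "connected_set E (V - S - {w})"
      by (elim two_connected_extend_partition)
    have eq: "V - insert w S = V - S - {w}"
      by blast
    have "finite V"
      using sg unfolding simple_graph_def by simp
    then have "card (V - insert w S) < card (V - S)"
      unfolding eq using w by (intro card_Diff1_less) auto
    then have "\<exists>ws. distinct ws \<and> set ws = V - insert w S \<and> last ws = v \<and>
      (\<forall>k. connected_set E (insert w S \<union> set (take k ws)) \<and> connected_set E (set (drop k ws)))"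
      using less.prems(1,4) w S' T'[folded eq] by (intro less.hyps) auto
    then obtain ws where ws: "distinct ws" "set ws = V - insert w S" "last ws = v"
      and conn: "\<forall>k. connected_set E (insert w S \<union> set (take k ws)) \<and> connected_set E (set (drop k ws))"
      by blast
    have insert_w: "insert w (V - insert w S) = V - S"
      using w by blast
    have "v \<in> set ws"
      using ws(2) w less.prems(4) by blast
    then have "ws \<noteq> []"
      by auto
    moreover have "connected_set E (S \<union> set (take k (w # ws))) \<and> connected_set E (set (drop k (w # ws)))"
      for k
      using conn less.prems(3,5) ws(2) insert_w
      by (cases k) auto
    ultimately show ?thesis
      using ws w by (intro exI[of _ "w # ws"]) auto
  qed
qed

lemma two_connected_edge_ordering:
  assumes sg: "simple_graph V E" and tc: "two_connected V E" and uv: "{u, v} \<in> E"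
  obtains L where "distinct L" "set L = V" "hd L = u" "last L = v"
    "\<And>k. connected_set E (set (take k L))" "\<And>k. connected_set E (set (drop k L))"
proof -
  have u: "u \<in> V" and v: "v \<in> V - {u}"
    using edge_endpoints[OF sg uv] by auto
  have "connected_set E {u}"
    unfolding connected_set_def by simp
  moreover have "connected_set E (V - {u})"
    using sg tc u by (rule two_connected_connected_set_delete)
  ultimately obtain ws where ws: "distinct ws" "set ws = V - {u}" "last ws = v"
    and conn: "\<And>k. connected_set E ({u} \<union> set (take k ws)) \<and> connected_set E (set (drop k ws))"
    using two_connected_ordering_extension[OF sg tc, of "{u}" v] u v by blast
  have "v \<in> set ws"
    using ws(2) v by blast
  then have "ws \<noteq> []"
    by auto
  moreover have "connected_set E V"
    using sg tc unfolding two_connected_def by (blast intro: connected_set_vertices)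
  moreover have "insert u (V - {u}) = V"
    using u by blast
  ultimately have "connected_set E (set (take k (u # ws)))" "connected_set E (set (drop k (u # ws)))"
    and "distinct (u # ws)" "set (u # ws) = V" "last (u # ws) = v" for k
    using conn ws by (cases k; simp add: connected_set_def)+
  then show thesis
    by (intro that[of "u # ws"]) simp_all
qed

subsection \<open>Edge cuts and bonds\<close>

lemma edge_cut_pair:
  assumes "e \<in> edge_cut E A" "simple_graph V E"
  obtains a b where "e = {a, b}" "a \<in> A" "b \<in> V - A"
proof -
  have "e \<in> E"
    using assms(1) unfolding edge_cut_def by blast
  with assms(2) obtain p q where pq: "e = {p, q}" "p \<in> V" "q \<in> V" "p \<noteq> q"
    by (rule edge_is_pair)
  show thesis
  proof (cases "p \<in> A")
    case True
    then show thesis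
      using that[of p q] pq assms(1) unfolding edge_cut_def by auto
  next
    case False
    then show thesis
      using that[of q p] pq assms(1) unfolding edge_cut_def by (auto simp: insert_commute)
  qed
qed

lemma reach_delete_edge_cut:
  assumes "reach (E - edge_cut E A) x y"
  shows "x \<in> A \<longleftrightarrow> y \<in> A"
proof -
  have "x \<in> A \<Longrightarrow> y \<in> A" if "reach (E - edge_cut E A) x y" for x y
    using that unfolding reach_def by (induction rule: rtranclp_induct) (auto simp: edge_cut_def)
  then show ?thesis
    using assms reach_sym by metis
qed

lemma reachable_delete_edge_cut:
  assumes "A \<subseteq> V" "connected_set E A" "connected_set E (V - A)" "B \<in> {A, V - A}" "x \<in> B"
  shows "{y \<in> V. reach (E - edge_cut E A) x y} = B"
proof
  show "{y \<in> V. reach (E - edge_cut E A) x y} \<subseteq> B"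
    using assms(1,4,5) reach_delete_edge_cut[of E A x] by blast
  have sub: "induced E B \<subseteq> E - edge_cut E A"
    using assms(4) unfolding induced_def edge_cut_def by blast
  have "reach (induced E B) x y" if "y \<in> B" for y
    using assms(2-5) that unfolding connected_set_def by blast
  then have "reach (E - edge_cut E A) x y" if "y \<in> B" for y
    using that reach_mono[OF _ sub] by blast
  then show "B \<subseteq> {y \<in> V. reach (E - edge_cut E A) x y}"
    using assms(1,4) by blast
qed

lemma components_delete_edge_cut:
  assumes "A \<subseteq> V" "A \<noteq> {}" "A \<noteq> V" "connected_set E A" "connected_set E (V - A)"
  shows "components V (E - edge_cut E A) = {A, V - A}"
proof
  have "{y \<in> V. reach (E - edge_cut E A) x y} \<in> {A, V - A}" if "x \<in> V" for x
    using reachable_delete_edge_cut[OF assms(1,4,5), of A x]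
      reachable_delete_edge_cut[OF assms(1,4,5), of "V - A" x] that by blast
  then show "components V (E - edge_cut E A) \<subseteq> {A, V - A}"
    unfolding components_def by blast
  obtain a b where "a \<in> A" "b \<in> V - A"
    using assms(1-3) by blast
  then show "{A, V - A} \<subseteq> components V (E - edge_cut E A)"
    using reachable_delete_edge_cut[OF assms(1,4,5), of A a]
      reachable_delete_edge_cut[OF assms(1,4,5), of "V - A" b] assms(1)
    unfolding components_def by blast
qed

lemma components_connected_graph: "connected_graph V E \<Longrightarrow> components V E = {V}"
  unfolding connected_graph_def components_def by auto

lemma bond_edge_cut:
  assumes sg: "simple_graph V E" and cg: "connected_graph V E"
    and A: "A \<subseteq> V" "A \<noteq> {}" "A \<noteq> V" "connected_set E A" "connected_set E (V - A)"
  shows "bond V E (edge_cut E A)"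
proof -
  let ?C = "edge_cut E A"
  have one: "num_components V E = 1"
    using cg unfolding num_components_def by (simp add: components_connected_graph)
  have "A \<noteq> V - A"
    using A(2) by blast
  then have "num_components V (E - ?C) = 2"
    using components_delete_edge_cut[OF A] unfolding num_components_def by simp
  then have "disconnecting V E ?C"
    using one unfolding disconnecting_def edge_cut_def by auto
  moreover have "\<not> disconnecting V E F" if F: "F \<subset> ?C" for F
  proof -
    obtain e where e: "e \<in> ?C" "e \<notin> F"
      using F by blast
    obtain a b where ab: "e = {a, b}" "a \<in> A" "b \<in> V - A"
      using e(1) sg by (rule edge_cut_pair)
    have side: "reach (E - F) c x" if "B \<in> {A, V - A}" "c \<in> B" "x \<in> B" for B c x
    proof -
      have "reach (E - ?C) c x"
        using reachable_delete_edge_cut[OF A(1,4,5) that(1,2)] that(3) by blast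
      moreover have "E - ?C \<subseteq> E - F"
        using F by blast
      ultimately show ?thesis
        by (rule reach_mono)
    qed
    have ab_reach: "reach (E - F) a b"
      using e ab unfolding edge_cut_def by (intro reach_edge) auto
    have from_a: "reach (E - F) a x" if "x \<in> V" for x
    proof (cases "x \<in> A")
      case True
      then show ?thesis using side[of A a x] ab(2) by blast
    next
      case False
      then have "reach (E - F) b x"
        using side[of "V - A" b x] ab(3) that by blast
      with ab_reach show ?thesis
        by (rule reach_trans)
    qed
    have "connected_graph V (E - F)"
      unfolding connected_graph_def
    proof (intro conjI ballI)
      show "V \<noteq> {}"
        using A(1,2) by blast
      fix x y assume "x \<in> V" "y \<in> V"
      then show "reach (E - F) x y"
        using from_a reach_sym reach_trans by metis
    qed
    then show ?thesis
      using one unfolding disconnecting_def num_components_def by (simp add: components_connected_graph)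
  qed
  ultimately show ?thesis
    unfolding bond_def by blast
qed

subsection \<open>Path-decompositions from vertex orderings\<close>

lemma nth_mem_take_iff:
  assumes "distinct L" "m < length L"
  shows "L ! m \<in> set (take i L) \<longleftrightarrow> m < i"
  using assms by (auto simp: in_set_conv_nth nth_eq_iff_index_eq)

lemma set_drop_eq_Diff_take:
  assumes "distinct L"
  shows "set (drop i L) = set L - set (take i L)"
proof -
  have "set L = set (take i L) \<union> set (drop i L)"
    using set_append[of "take i L" "drop i L"] by simp
  then show ?thesis
    using set_take_disj_set_drop_if_distinct[OF assms order_refl] by blast
qed

definition separation_bag :: "'a set set \<Rightarrow> 'a list \<Rightarrow> nat \<Rightarrow> 'a set" where
  "separation_bag E L i =
     insert (L ! i) {L ! j | j. j < i \<and> (\<exists>m. i \<le> m \<and> m < length L \<and> {L ! j, L ! m} \<in> E)}"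

lemma nth_mem_separation_bag:
  assumes "distinct L" "i < length L" "p < length L"
  shows "L ! p \<in> separation_bag E L i \<longleftrightarrow>
           p = i \<or> p < i \<and> (\<exists>m. i \<le> m \<and> m < length L \<and> {L ! p, L ! m} \<in> E)"
proof -
  have eq: "L ! p = L ! j \<longleftrightarrow> p = j" if "j \<le> i" for j
    using assms that by (simp add: nth_eq_iff_index_eq)
  show ?thesis
  proof
    assume "L ! p \<in> separation_bag E L i"
    then consider "L ! p = L ! i"
      | j m where "L ! p = L ! j" "j < i" "i \<le> m" "m < length L" "{L ! j, L ! m} \<in> E"
      unfolding separation_bag_def by blast
    then show "p = i \<or> p < i \<and> (\<exists>m. i \<le> m \<and> m < length L \<and> {L ! p, L ! m} \<in> E)"
    proof cases
      case 1
      then show ?thesis using eq by simp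
    next
      case (2 j m)
      then have "p = j" using eq[of j] by simp
      with 2 show ?thesis by blast
    qed
  qed (auto simp: separation_bag_def)
qed

lemma separation_bag_subset: "set L = V \<Longrightarrow> i < length L \<Longrightarrow> separation_bag E L i \<subseteq> V"
  unfolding separation_bag_def by auto

lemma edge_subset_separation_bag:
  assumes "distinct L" "p < q" "q < length L" "{L ! p, L ! q} \<in> E"
  shows "{L ! p, L ! q} \<subseteq> separation_bag E L q"
  using assms by (auto simp: nth_mem_separation_bag)

lemma path_decomposition_separation_bags:
  assumes sg: "simple_graph V E" and L: "distinct L" "set L = V" "L \<noteq> []"
  shows "path_decomposition V E (map (separation_bag E L) [0..<length L])" (is "path_decomposition V E ?Xs")
  unfolding path_decomposition_def
proof (intro conjI ballI)
  show "?Xs \<noteq> []"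
    using L(3) by simp
  show "X \<subseteq> V" if X: "X \<in> set ?Xs" for X
  proof -
    obtain i where "i < length L" "X = separation_bag E L i"
      using X by auto
    then show ?thesis
      using separation_bag_subset[OF L(2)] by simp
  qed
next
  fix x assume "x \<in> V"
  then obtain p where p: "p < length L" "L ! p = x"
    using L(2) by (auto simp: in_set_conv_nth)
  then show "\<exists>i<length ?Xs. x \<in> ?Xs ! i"
    using L(1) by (auto simp: nth_mem_separation_bag)
  show "\<forall>i j k. i \<le> j \<and> j \<le> k \<and> k < length ?Xs \<and> x \<in> ?Xs ! i \<and> x \<in> ?Xs ! k \<longrightarrow> x \<in> ?Xs ! j"
  proof (intro allI impI)
    fix i j k assume ijk: "i \<le> j \<and> j \<le> k \<and> k < length ?Xs \<and> x \<in> ?Xs ! i \<and> x \<in> ?Xs ! k"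
    then have "p \<le> i" and k: "p = k \<or> (\<exists>m. k \<le> m \<and> m < length L \<and> {L ! p, L ! m} \<in> E)"
      using L(1) p by (auto simp: nth_mem_separation_bag)
    have "p = j \<or> p < j \<and> (\<exists>m. j \<le> m \<and> m < length L \<and> {L ! p, L ! m} \<in> E)"
    proof (cases "p = j")
      case False
      with \<open>p \<le> i\<close> ijk have "p < j" "p \<noteq> k"
        by auto
      with k ijk show ?thesis
        by (auto intro: order.trans)
    qed simp
    then show "x \<in> ?Xs ! j"
      using ijk L(1) p by (auto simp: nth_mem_separation_bag)
  qed
next
  fix e assume "e \<in> E"
  with sg obtain a b where ab: "e = {a, b}" "a \<in> V" "b \<in> V" "a \<noteq> b"
    by (rule edge_is_pair)
  then obtain p q where pq: "p < length L" "L ! p = a" "q < length L" "L ! q = b"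
    using L(2) by (auto simp: in_set_conv_nth)
  then have "p \<noteq> q"
    using ab(4) by blast
  then have "p < q \<or> q < p"
    by arith
  then show "\<exists>i<length ?Xs. e \<subseteq> ?Xs ! i"
  proof
    assume "p < q"
    then show ?thesis
      using edge_subset_separation_bag[OF L(1), of p q] \<open>e \<in> E\<close> ab(1) pq by auto
  next
    assume "q < p"
    then show ?thesis
      using edge_subset_separation_bag[OF L(1), of q p] \<open>e \<in> E\<close> ab(1) pq by (auto simp: insert_commute)
  qed
qed

lemma card_separation_bag_le:
  assumes "finite E" "distinct L"
  shows "card (separation_bag E L i) \<le> card (edge_cut E (set (take i L))) + 1"
proof -
  let ?P = "set (take i L)"
  let ?Y = "{L ! j | j. j < i \<and> (\<exists>m. i \<le> m \<and> m < length L \<and> {L ! j, L ! m} \<in> E)}"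
  \<comment> \<open>each earlier vertex of the bag is the endpoint inside the prefix of a prefix-cut edge\<close>
  have "?Y \<subseteq> (\<lambda>e. the_elem (e \<inter> ?P)) ` edge_cut E ?P"
  proof
    fix y assume "y \<in> ?Y"
    then obtain j m where jm: "y = L ! j" "j < i" "i \<le> m" "m < length L" "{L ! j, L ! m} \<in> E"
      by blast
    then have "L ! j \<in> ?P" "L ! m \<notin> ?P"
      using assms(2) by (simp_all add: nth_mem_take_iff)
    then have "{L ! j, L ! m} \<inter> ?P = {L ! j}" "{L ! j, L ! m} \<in> edge_cut E ?P"
      using jm(5) unfolding edge_cut_def by auto
    then show "y \<in> (\<lambda>e. the_elem (e \<inter> ?P)) ` edge_cut E ?P"
      using jm(1) by (metis image_eqI the_elem_eq)
  qed
  moreover have "finite (edge_cut E ?P)"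
    using assms(1) unfolding edge_cut_def by simp
  ultimately have "card ?Y \<le> card (edge_cut E ?P)"
    by (meson card_image_le card_mono finite_imageI le_trans)
  then show ?thesis
    unfolding separation_bag_def by (intro card_insert_le_m1) auto
qed

lemma pathwidth_le_prefix_cuts:
  assumes sg: "simple_graph V E" and L: "distinct L" "set L = V" "L \<noteq> []"
    and cuts: "\<And>i. 0 < i \<Longrightarrow> i < length L \<Longrightarrow> card (edge_cut E (set (take i L))) \<le> k"
  shows "pathwidth V E \<le> k"
proof -
  let ?Xs = "map (separation_bag E L) [0..<length L]"
  have "card (separation_bag E L i) \<le> k + 1" if "i < length L" for i
  proof (cases "i = 0")
    case True
    then show ?thesis
      unfolding separation_bag_def by simp
  next
    case False
    then show ?thesis
      using card_separation_bag_le[OF finite_edges[OF sg] L(1), of i] cuts[of i] that by simp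
  qed
  then have "Max (card ` set ?Xs) \<le> k + 1"
    using L(3) by (subst Max_le_iff) auto
  then have "pd_width ?Xs \<le> k"
    unfolding pd_width_def by simp
  moreover have "pathwidth V E \<le> pd_width ?Xs"
    unfolding pathwidth_def using path_decomposition_separation_bags[OF sg L]
    by (intro Least_le) blast
  ultimately show ?thesis
    by simp
qed

lemma two_connected_edge_in_bond_pathwidth_le:
  assumes sg: "simple_graph V E" and tc: "two_connected V E" and "e \<in> E"
  shows "\<exists>F. bond V E F \<and> e \<in> F \<and> pathwidth V E \<le> card F"
proof -
  obtain u v where e: "e = {u, v}" "u \<noteq> v"
    using edge_is_pair[OF sg \<open>e \<in> E\<close>] by metis
  have "{u, v} \<in> E"
    using \<open>e \<in> E\<close> e(1) by simp
  with sg tc obtain L where L: "distinct L" "set L = V" "hd L = u" "last L = v"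
    and conn: "\<And>k. connected_set E (set (take k L))" "\<And>k. connected_set E (set (drop k L))"
    by (rule two_connected_edge_ordering) blast
  let ?cut = "\<lambda>i. card (edge_cut E (set (take i L)))"
  have "{u, v} \<subseteq> set L"
    using edge_endpoints[OF sg] e \<open>e \<in> E\<close> L(2) by blast
  then have "card {u, v} \<le> length L"
    by (meson List.finite_set card_length card_mono order_trans)
  then have len: "1 < length L"
    using e(2) by simp
  moreover have "?cut i < Suc (card E)" for i
    using card_mono[OF finite_edges[OF sg], of "edge_cut E (set (take i L))"]
    unfolding edge_cut_def by auto
  ultimately obtain i where i: "0 < i" "i < length L"
    and i_max: "\<And>j. 0 < j \<and> j < length L \<Longrightarrow> ?cut j \<le> ?cut i"
    using ex_has_greatest_nat[of "\<lambda>i. 0 < i \<and> i < length L" 1 ?cut "Suc (card E)"] by blast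
  let ?A = "set (take i L)"
  have "0 < length L" "length L - 1 < length L"
    using len by linarith+
  then have "L ! 0 \<in> ?A" "L ! (length L - 1) \<notin> ?A"
    using nth_mem_take_iff[OF L(1), of _ i] i by auto
  moreover have "L \<noteq> []"
    using len by (cases L) simp_all
  ultimately have uv_A: "u \<in> ?A" "v \<notin> ?A"
    using L(3,4) by (simp_all add: hd_conv_nth last_conv_nth)
  have "V - ?A = set (drop i L)"
    using L(1,2) by (simp add: set_drop_eq_Diff_take)
  then have "bond V E (edge_cut E ?A)"
    using sg tc uv_A conn L(2) set_take_subset[of i L] edge_endpoints(2)[OF sg \<open>{u, v} \<in> E\<close>]
    unfolding two_connected_def by (intro bond_edge_cut) auto
  moreover have "e \<in> edge_cut E ?A"
    using \<open>e \<in> E\<close> e uv_A unfolding edge_cut_def by auto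
  moreover have "pathwidth V E \<le> ?cut i"
    using sg L(1,2) len i_max by (intro pathwidth_le_prefix_cuts) auto
  ultimately show ?thesis
    by blast
qed

lemma two_connected_edges_nonempty:
  assumes "simple_graph V E" "two_connected V E"
  shows "E \<noteq> {}"
proof -
  have "finite V" "\<not> card V \<le> Suc 0"
    using assms unfolding simple_graph_def two_connected_def by auto
  then obtain x y where "x \<in> V" "y \<in> V" "x \<noteq> y"
    using card_le_Suc0_iff_eq by blast
  then have "reach E x y" "x \<in> {x}" "y \<notin> {x}"
    using assms(2) unfolding two_connected_def connected_graph_def by auto
  then obtain a b where "{a, b} \<in> E" "a \<in> {x}" "b \<notin> {x}"
    by (rule reach_leaves_set)
  then show ?thesis
    by blast
qed

lemma bond_subset_edges: "bond V E F \<Longrightarrow> F \<subseteq> E"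
  unfolding bond_def disconnecting_def by blast

lemma card_bond_le_cocircumference:
  assumes "simple_graph V E" "bond V E F"
  shows "card F \<le> cocircumference V E"
proof -
  have "{card F | F. bond V E F} \<subseteq> {..card E}"
  proof
    fix n assume "n \<in> {card F | F. bond V E F}"
    then obtain F' where "n = card F'" "bond V E F'"
      by blast
    then have "F' \<subseteq> E"
      by (simp add: bond_subset_edges)
    with \<open>n = card F'\<close> show "n \<in> {..card E}"
      using card_mono[OF finite_edges[OF assms(1)]] by simp
  qed
  then have "finite {card F | F. bond V E F}"
    by (rule finite_subset) simp
  moreover have "card F \<in> {card F | F. bond V E F}"
    using assms(2) by blast
  ultimately show ?thesis
    unfolding cocircumference_def by (rule Max_ge)
qed

theorem theorem1p4:
  fixes V :: "'a set" and E :: "'a set set"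
  assumes "simple_graph V E" and "two_connected V E"
  shows "(\<forall>e\<in>E. \<exists>F. bond V E F \<and> e \<in> F \<and> pathwidth V E \<le> 3 * card F - 2)
         \<and> pathwidth V E \<le> 3 * cocircumference V E - 2"
proof -
  have bond_bound: "\<exists>F. bond V E F \<and> e \<in> F \<and> pathwidth V E \<le> 3 * card F - 2" if e: "e \<in> E" for e
  proof -
    obtain F where F: "bond V E F" "e \<in> F" "pathwidth V E \<le> card F"
      using two_connected_edge_in_bond_pathwidth_le[OF assms e] by blast
    have "finite F"
      using finite_edges[OF assms(1)] bond_subset_edges[OF F(1)] by (rule finite_subset[rotated])
    with F(2) have "0 < card F"
      by (auto simp: card_gt_0_iff)
    with F show ?thesis
      by (intro exI[of _ F]) linarith
  qed
  obtain e where "e \<in> E"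
    using two_connected_edges_nonempty[OF assms] by blast
  then obtain F where F: "bond V E F" "pathwidth V E \<le> 3 * card F - 2"
    using bond_bound by blast
  have "card F \<le> cocircumference V E"
    using assms(1) F(1) by (rule card_bond_le_cocircumference)
  with F(2) have "pathwidth V E \<le> 3 * cocircumference V E - 2"
    by linarith
  with bond_bound show ?thesis
    by blast
qed

end
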